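(* For any $\rho>0$ and $\Delta>0$, the following randomized procedure $\texttt{DPStats}_M$ satisfies $\rho$-zCDP (with respect to datasets of $n$ rows $(x_i,y_i)\in\mathbb{R}^2$, where $n$ and $n_1$ are public; rows $1,\dots,n_1$ form group 1 and rows $n_1+1,\dots,n$ form group 2). Input: data, integers $n\ge2$ and $1\le n_1<n$, positive integers $r,q$ with $r<n$, and $\rho,\Delta>0$. Set $\rho'=\rho/8$, $n_2=n-n_1$, $G_1=\{1,\dots,n_1\}$, $G_2=\{n_1+1,\dots,n\}$, and for $j\in\{1,2\}$ compute with independent Gaussian noises: $\tilde{\bar x}_j=\frac1{n_j}\sum_{i\in G_j}[x_i]_{-\Delta}^{\Delta}+\mathcal{N}(0,\frac{2\Delta^2}{\rho' n_j^2})$, $\widetilde{\overline{x^2}}_j=\frac1{n_j}\sum_{i\in G_j}[x_i^2]_0^{\Delta^2}+\mathcal{N}(0,\frac{\Delta^4}{2\rho' n_j^2})$, $\widetilde{\overline{xy}}_j=\frac1{n_j}\sum_{i\in G_j}[x_iy_i]_{-\Delta^2}^{\Delta^2}+\mathcal{N}(0,\frac{2\Delta^4}{\rho' n_j^2})$, $\widetilde{\overline{y^2}}_j=\frac1{n_j}\sum_{i\in G_j}[y_i^2]_0^{\Delta^2}+\mathcal{N}(0,\frac{\Delta^4}{2\rho' n_j^2})$; then $\tilde{\bar x}=\frac{n_1}{n}\tilde{\bar x}_1+\frac{n_2}{n}\tilde{\bar x}_2$, and similarly $\widetilde{\overline{x^2}},\widetilde{\overline{xy}},\widetilde{\overline{y^2}}$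 as the corresponding $n_j/n$-weighted combinations; $\tilde\beta_j=\widetilde{\overline{xy}}_j/\widetilde{\overline{x^2}}_j$, $\tilde\beta=\frac{n_1}{n}\tilde\beta_1+\frac{n_2}{n}\tilde\beta_2$; $\widetilde{S_0^2}=\frac{n\widetilde{\overline{y^2}}+n\tilde\beta^2-2n\widetilde{\overline{xy}}\tilde\beta}{n-r}$, $\widetilde{S^2}=\frac{\sum_{j=1}^2\left(n_j\widetilde{\overline{y^2}}_j+n_j\tilde\beta_j^2-2n_j\widetilde{\overline{xy}}_j\tilde\beta_j\right)}{n-r}$. Output $(\perp,\perp)$ unless $\min\big(\widetilde{S_0^2},(n\widetilde{\overline{x^2}}-n\tilde{\bar x}^2)/(n-1)\big)>0$, in which case output $\tilde\theta_0=(\tilde\beta_1,\tilde{\bar x},\widetilde{\overline{x^2}},\widetilde{S_0^2},n_1,n_2,n)$ and $\tilde\theta_1=(\tilde\beta_1,\tilde\beta_2,\widetilde{\overline{x^2}}_1,\widetilde{\overline{x^2}}_2,\widetilde{\overline{x^2}},\widetilde{S^2},n_1,n_2,n)$.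
   Context: $[z]_a^b$ denotes $z$ clipped to $[a,b]$. Two datasets of $n$ rows are neighboring if they differ in exactly one row. A randomized mechanism $\mathcal{M}$ satisfies $\rho$-zCDP if for all neighboring datasets $\mathbf{x},\mathbf{x}'$ and all $\alpha\in(1,\infty)$, $D_\alpha(\mathcal{M}(\mathbf{x})\|\mathcal{M}(\mathbf{x}'))\le\rho\alpha$, where $D_\alpha$ is the Rényi divergence of order $\alpha$. *)

theory Defs
  imports "HOL-Probability.Probability"
begin

definition clip :: "real \<Rightarrow> real \<Rightarrow> real \<Rightarrow> real" where
  "clip a b z = max a (min b z)"

text \<open>A dataset of n rows (x_i, y_i) in R^2 is a list of length n; row i of the paper
  is list position i-1.  Two datasets are neighbouring if they differ in exactly one row.\<close>

definition neighboring :: "nat \<Rightarrow> (real \<times> real) list \<Rightarrow> (real \<times> real) list \<Rightarrow> bool" where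
  "neighboring n xs xs' \<longleftrightarrow> length xs = n \<and> length xs' = n \<and>
     (\<exists>i<n. xs ! i \<noteq> xs' ! i \<and> (\<forall>j<n. j \<noteq> i \<longrightarrow> xs ! j = xs' ! j))"

definition renyi_divergence :: "real \<Rightarrow> 'a measure \<Rightarrow> 'a measure \<Rightarrow> ereal" where
  "renyi_divergence \<alpha> P Q =
     (if absolutely_continuous Q P then
        (let I = (\<integral>\<^sup>+ \<omega>. ennreal ((enn2real (RN_deriv Q P \<omega>)) powr \<alpha>) \<partial>Q) in
          if I = \<infinity> then \<infinity> else ereal (ln (enn2real I) / (\<alpha> - 1)))
      else \<infinity>)"

definition zCDP :: "nat \<Rightarrow> real \<Rightarrow> ((real \<times> real) list \<Rightarrow> 'b measure) \<Rightarrow> bool" where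
  "zCDP n \<rho> M \<longleftrightarrow>
     (\<forall>xs xs'. neighboring n xs xs' \<longrightarrow>
        (\<forall>\<alpha>::real. \<alpha> > 1 \<longrightarrow> renyi_divergence \<alpha> (M xs) (M xs') \<le> ereal (\<rho> * \<alpha>)))"

text \<open>Outputs: None stands for (\<bottom>,\<bottom>); Some (\<theta>0, \<theta>1) otherwise.
  The sigma-algebra is the Borel one on the tuples, with \<bottom> an extra atom.\<close>

type_synonym theta0 = "real \<times> real \<times> real \<times> real \<times> nat \<times> nat \<times> nat"
type_synonym theta1 = "real \<times> real \<times> real \<times> real \<times> real \<times> real \<times> nat \<times> nat \<times> nat"

definition out_space :: "(theta0 \<times> theta1) option measure" where
  "out_space = sigma UNIV {A. Some -` A \<in> sets (borel :: (theta0 \<times> theta1) measure)}"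

text \<open>Eight independent Gaussian noises z 0 .. z 7; for group j (j = 1,2) the noises
  z (4(j-1)), ..., z (4(j-1)+3) are added to the means of x, x^2, xy, y^2 respectively.
  normal_density 0 \<sigma> is the N(0,\<sigma>^2) density.\<close>

definition noise_var :: "real \<Rightarrow> real \<Rightarrow> nat \<Rightarrow> nat \<Rightarrow> nat \<Rightarrow> real" where
  "noise_var \<rho> \<Delta> n1 n2 k =
     (let \<rho>' = \<rho> / 8; nj = real (if k < 4 then n1 else n2) in
      if k mod 4 = 0 then 2 * \<Delta>^2 / (\<rho>' * nj^2)
      else if k mod 4 = 1 then \<Delta>^4 / (2 * \<rho>' * nj^2)
      else if k mod 4 = 2 then 2 * \<Delta>^4 / (\<rho>' * nj^2)
      else \<Delta>^4 / (2 * \<rho>' * nj^2))"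

definition noise_space :: "real \<Rightarrow> real \<Rightarrow> nat \<Rightarrow> nat \<Rightarrow> (nat \<Rightarrow> real) measure" where
  "noise_space \<rho> \<Delta> n1 n2 =
     PiM {0..<8} (\<lambda>k. density lborel (normal_density 0 (sqrt (noise_var \<rho> \<Delta> n1 n2 k))))"

definition dpstats_out ::
  "nat \<Rightarrow> nat \<Rightarrow> nat \<Rightarrow> real \<Rightarrow> (real \<times> real) list \<Rightarrow> (nat \<Rightarrow> real) \<Rightarrow> (theta0 \<times> theta1) option" where
  "dpstats_out n n1 r \<Delta> xs z =
    (let n2 = n - n1;
         G = (\<lambda>j::nat. if j = 1 then take n1 xs else drop n1 xs);
         nn = (\<lambda>j::nat. real (if j = 1 then n1 else n2));
         b = (\<lambda>j::nat. if j = 1 then 0 else 4::nat);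
         mx  = (\<lambda>j. (\<Sum>(x,y)\<leftarrow>G j. clip (-\<Delta>) \<Delta> x) / nn j + z (b j));
         mx2 = (\<lambda>j. (\<Sum>(x,y)\<leftarrow>G j. clip 0 (\<Delta>^2) (x^2)) / nn j + z (b j + 1));
         mxy = (\<lambda>j. (\<Sum>(x,y)\<leftarrow>G j. clip (-(\<Delta>^2)) (\<Delta>^2) (x*y)) / nn j + z (b j + 2));
         my2 = (\<lambda>j. (\<Sum>(x,y)\<leftarrow>G j. clip 0 (\<Delta>^2) (y^2)) / nn j + z (b j + 3));
         N = real n;
         w = (\<lambda>f. nn 1 / N * f 1 + nn 2 / N * f 2);
         Mx = w mx; Mx2 = w mx2; Mxy = w mxy; My2 = w my2;
         \<beta>j = (\<lambda>j. mxy j / mx2 j);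
         \<beta> = w \<beta>j;
         S02 = (N * My2 + N * \<beta>^2 - 2 * N * Mxy * \<beta>) / (real n - real r);
         S2 = (\<Sum>j\<in>{1,2::nat}. nn j * my2 j + nn j * (\<beta>j j)^2 - 2 * nn j * mxy j * \<beta>j j)
                / (real n - real r)
     in if min S02 ((N * Mx2 - N * Mx^2) / (real n - 1)) > 0
        then Some ((\<beta>j 1, Mx, Mx2, S02, n1, n2, n),
                   (\<beta>j 1, \<beta>j 2, mx2 1, mx2 2, Mx2, S2, n1, n2, n))
        else None)"

text \<open>q is an input of the procedure that it does not use.\<close>
definition DPStats_M ::
  "nat \<Rightarrow> nat \<Rightarrow> nat \<Rightarrow> nat \<Rightarrow> real \<Rightarrow> real \<Rightarrow> (real \<times> real) list \<Rightarrow> (theta0 \<times> theta1) option measure" where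
  "DPStats_M n n1 r q \<rho> \<Delta> xs =
     distr (noise_space \<rho> \<Delta> n1 (n - n1)) out_space (dpstats_out n n1 r \<Delta> xs)"

end

theory Submission
  imports Defs
begin

text \<open>After shifting the noise, the mechanism run on data \<open>xs\<close> is one fixed measurable map
  applied to a Gaussian vector with independent coordinates of variances \<open>\<sigma>\<^sub>k\<^sup>2\<close>, centred at the
  eight clipped group statistics \<open>c\<^sub>k(xs)\<close>.  The \<open>\<alpha>\<close>-th moment of the likelihood ratio of two
  such Gaussian products is \<open>exp (\<alpha> (\<alpha> - 1) \<Sum>\<^sub>k (c\<^sub>k - c'\<^sub>k)\<^sup>2 / (2 \<sigma>\<^sub>k\<^sup>2))\<close>, and by the data processing
  inequality (proved with Young's inequality on truncations of the Radon-Nikodym derivative) the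
  post-processing cannot increase it.  Changing one row moves \<open>c\<^sub>k\<close> by at most the width of the
  clipping interval divided by the group size, and the noise variances are calibrated so that each
  of the eight coordinates contributes at most \<open>\<rho>/8\<close> to the sum.\<close>

lemma Youngs_inequality_powr_conjugate:
  fixes a b \<alpha> :: real
  assumes "1 < \<alpha>" "0 \<le> a" "0 \<le> b"
  shows "a powr (\<alpha> - 1) * b \<le> (\<alpha> - 1) / \<alpha> * a powr \<alpha> + b powr \<alpha> / \<alpha>"
proof -
  have "a powr (\<alpha> - 1) * b \<le> (a powr (\<alpha> - 1)) powr (\<alpha> / (\<alpha> - 1)) / (\<alpha> / (\<alpha> - 1)) + b powr \<alpha> / \<alpha>"
    using assms by (intro Youngs_inequality) (auto simp: field_simps)
  also have "(a powr (\<alpha> - 1)) powr (\<alpha> / (\<alpha> - 1)) = a powr \<alpha>"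
    using assms by (simp add: powr_powr)
  finally show ?thesis
    using assms by (simp add: field_simps)
qed

lemma ennreal_le_of_le_convex_combination:
  fixes I J :: ennreal
  assumes "J \<noteq> \<top>" "J \<le> ennreal a * J + ennreal b * I" "0 \<le> a" "0 < b" "a + b = 1"
  shows "J \<le> I"
proof (cases "I = \<top>")
  case False
  then obtain i j where i: "I = ennreal i" "0 \<le> i" and j: "J = ennreal j" "0 \<le> j"
    using \<open>J \<noteq> \<top>\<close> by (cases I; cases J) auto
  have "ennreal j \<le> ennreal (a * j + b * i)"
    using assms i j by (simp add: ennreal_mult'[symmetric] ennreal_plus[symmetric] del: ennreal_plus)
  then have "j \<le> a * j + b * i"
    using assms i j by (subst (asm) ennreal_le_iff) auto
  moreover have "a * j + b * j = j"
    using \<open>a + b = 1\<close> by (metis distrib_right mult_1)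
  ultimately have "b * j \<le> b * i"
    by linarith
  then show ?thesis
    using i j \<open>0 < b\<close> by (simp add: ennreal_leI)
qed (simp add: top_unique)

lemma absolutely_continuous_distr:
  assumes ac: "absolutely_continuous M M'" and sets_eq: "sets M' = sets M"
    and g: "g \<in> measurable M N"
  shows "absolutely_continuous (distr M N g) (distr M' N g)"
  unfolding absolutely_continuous_def
proof
  fix A assume A: "A \<in> null_sets (distr M N g)"
  have g': "g \<in> measurable M' N"
    using g unfolding measurable_cong_sets[OF sets_eq refl] .
  have "g -` A \<inter> space M \<in> null_sets M" "A \<in> sets N"
    using A unfolding null_sets_distr_iff[OF g] by blast+
  moreover have "null_sets M \<subseteq> null_sets M'"
    using ac unfolding absolutely_continuous_def .
  ultimately have "g -` A \<inter> space M' \<in> null_sets M'"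
    using sets_eq_imp_space_eq[OF sets_eq] by auto
  then show "A \<in> null_sets (distr M' N g)"
    unfolding null_sets_distr_iff[OF g'] using \<open>A \<in> sets N\<close> by blast
qed

lemma SUP_ennreal_min_powr:
  fixes x \<alpha> :: real
  assumes "0 \<le> x" "0 < \<alpha>"
  shows "(SUP m::nat. ennreal (min x (real m) powr \<alpha>)) = ennreal (x powr \<alpha>)"
proof (rule antisym)
  show "(SUP m::nat. ennreal (min x (real m) powr \<alpha>)) \<le> ennreal (x powr \<alpha>)"
    using assms by (intro SUP_least ennreal_leI powr_mono2) auto
  obtain m :: nat where "x \<le> real m"
    using real_arch_simple by blast
  then have "ennreal (x powr \<alpha>) = ennreal (min x (real m) powr \<alpha>)"
    by simp
  then show "ennreal (x powr \<alpha>) \<le> (SUP m::nat. ennreal (min x (real m) powr \<alpha>))"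
    by (metis SUP_upper UNIV_I)
qed

lemma nn_integral_powr_le_of_le_RN_deriv_distr_density:
  fixes Q :: "'a measure" and p :: "'a \<Rightarrow> real" and k :: "'b \<Rightarrow> real"
  assumes Q: "prob_space Q" and p[measurable]: "p \<in> borel_measurable Q"
    and g[measurable]: "g \<in> measurable Q N"
    and k[measurable]: "k \<in> borel_measurable N" and k_nonneg: "\<And>\<omega>. 0 \<le> k \<omega>"
    and k_le: "\<And>\<omega>. k \<omega> \<le> enn2real (RN_deriv (distr Q N g) (distr (density Q p) N g) \<omega>)"
  shows "(\<integral>\<^sup>+\<omega>. k \<omega> powr \<alpha> \<partial>distr Q N g) \<le> (\<integral>\<^sup>+x. ennreal (p x) * ennreal (k (g x) powr (\<alpha> - 1)) \<partial>Q)"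
proof -
  interpret Q: prob_space Q by fact
  define Q' where "Q' = distr Q N g"
  define P' where "P' = distr (density Q p) N g"
  define h where "h = RN_deriv Q' P'"
  interpret Q': prob_space Q'
    unfolding Q'_def by (rule Q.prob_space_distr) simp
  have "absolutely_continuous Q' P'"
    unfolding Q'_def P'_def
    by (intro absolutely_continuous_distr absolutely_continuousI_density) simp_all
  then have density_h: "density Q' h = P'"
    unfolding h_def by (intro Q'.density_RN_deriv) (simp_all add: Q'_def P'_def)
  have "(\<integral>\<^sup>+\<omega>. k \<omega> powr \<alpha> \<partial>Q') \<le> (\<integral>\<^sup>+\<omega>. h \<omega> * ennreal (k \<omega> powr (\<alpha> - 1)) \<partial>Q')"
  proof (intro nn_integral_mono)
    fix \<omega>
    have "k \<omega> powr \<alpha> = k \<omega> powr (\<alpha> - 1) * k \<omega> powr 1"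
      by (metis powr_add diff_add_cancel)
    also have "\<dots> \<le> k \<omega> powr (\<alpha> - 1) * enn2real (h \<omega>)"
      using k_le[of \<omega>] k_nonneg[of \<omega>] by (simp add: h_def Q'_def P'_def mult_left_mono)
    finally have "ennreal (k \<omega> powr \<alpha>) \<le> ennreal (enn2real (h \<omega>)) * ennreal (k \<omega> powr (\<alpha> - 1))"
      by (simp add: ennreal_mult'[symmetric] mult.commute ennreal_leI)
    also have "\<dots> \<le> h \<omega> * ennreal (k \<omega> powr (\<alpha> - 1))"
      by (intro mult_right_mono) (auto simp: ennreal_enn2real_if)
    finally show "ennreal (k \<omega> powr \<alpha>) \<le> h \<omega> * ennreal (k \<omega> powr (\<alpha> - 1))" .
  qed
  also have "\<dots> = (\<integral>\<^sup>+\<omega>. k \<omega> powr (\<alpha> - 1) \<partial>P')"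
    unfolding density_h[symmetric] by (simp add: nn_integral_density h_def Q'_def)
  also have "\<dots> = (\<integral>\<^sup>+x. ennreal (p x) * ennreal (k (g x) powr (\<alpha> - 1)) \<partial>Q)"
    unfolding P'_def by (simp add: nn_integral_distr nn_integral_density)
  finally show ?thesis
    unfolding Q'_def .
qed

text \<open>For \<open>J = \<integral> k\<^sup>\<alpha>\<close> and \<open>I = \<integral> p\<^sup>\<alpha>\<close>, Young's inequality gives \<open>J \<le> ((\<alpha> - 1)/\<alpha>) J + I/\<alpha>\<close>; boundedness
  of \<open>k\<close> makes \<open>J\<close> finite, hence \<open>J \<le> I\<close>.\<close>

lemma nn_integral_powr_le_of_bounded_le_RN_deriv_distr_density:
  fixes Q :: "'a measure" and p :: "'a \<Rightarrow> real" and k :: "'b \<Rightarrow> real"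
  assumes Q: "prob_space Q" and p[measurable]: "p \<in> borel_measurable Q" and p_nonneg: "\<And>x. 0 \<le> p x"
    and g[measurable]: "g \<in> measurable Q N" and \<alpha>: "1 < \<alpha>"
    and k[measurable]: "k \<in> borel_measurable N" and k_nonneg: "\<And>\<omega>. 0 \<le> k \<omega>"
    and k_bounded: "\<And>\<omega>. k \<omega> \<le> B"
    and k_le: "\<And>\<omega>. k \<omega> \<le> enn2real (RN_deriv (distr Q N g) (distr (density Q p) N g) \<omega>)"
  shows "(\<integral>\<^sup>+\<omega>. k \<omega> powr \<alpha> \<partial>distr Q N g) \<le> (\<integral>\<^sup>+x. p x powr \<alpha> \<partial>Q)"
proof -
  interpret Q': prob_space "distr Q N g"
    using Q by (rule prob_space.prob_space_distr) simp
  define J where "J = (\<integral>\<^sup>+\<omega>. k \<omega> powr \<alpha> \<partial>distr Q N g)"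
  define I where "I = (\<integral>\<^sup>+x. p x powr \<alpha> \<partial>Q)"
  have "J \<le> (\<integral>\<^sup>+x. ennreal (p x) * ennreal (k (g x) powr (\<alpha> - 1)) \<partial>Q)"
    unfolding J_def using Q p g k k_nonneg k_le by (rule nn_integral_powr_le_of_le_RN_deriv_distr_density)
  also have "\<dots> \<le> (\<integral>\<^sup>+x. ennreal ((\<alpha> - 1) / \<alpha>) * ennreal (k (g x) powr \<alpha>)
                         + ennreal (1 / \<alpha>) * ennreal (p x powr \<alpha>) \<partial>Q)"
  proof (intro nn_integral_mono)
    fix x
    have "k (g x) powr (\<alpha> - 1) * p x \<le> (\<alpha> - 1) / \<alpha> * k (g x) powr \<alpha> + p x powr \<alpha> / \<alpha>"
      using \<alpha> k_nonneg p_nonneg by (rule Youngs_inequality_powr_conjugate)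
    then show "ennreal (p x) * ennreal (k (g x) powr (\<alpha> - 1))
        \<le> ennreal ((\<alpha> - 1) / \<alpha>) * ennreal (k (g x) powr \<alpha>) + ennreal (1 / \<alpha>) * ennreal (p x powr \<alpha>)"
      using \<alpha> p_nonneg[of x]
      by (simp add: ennreal_mult'[symmetric] ennreal_plus[symmetric] mult.commute ennreal_leI
          del: ennreal_plus)
  qed
  also have "\<dots> = ennreal ((\<alpha> - 1) / \<alpha>) * J + ennreal (1 / \<alpha>) * I"
    unfolding J_def I_def by (simp add: nn_integral_add nn_integral_cmult nn_integral_distr)
  finally have J_le: "J \<le> ennreal ((\<alpha> - 1) / \<alpha>) * J + ennreal (1 / \<alpha>) * I" .
  have "J \<le> (\<integral>\<^sup>+\<omega>. B powr \<alpha> \<partial>distr Q N g)"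
    unfolding J_def using \<alpha> k_nonneg k_bounded
    by (intro nn_integral_mono ennreal_leI powr_mono2) auto
  then have J_finite: "J \<noteq> \<top>"
    using Q'.emeasure_space_1 by (auto simp: top_unique)
  have "(\<alpha> - 1) / \<alpha> + 1 / \<alpha> = 1"
    using \<alpha> by (simp add: diff_divide_distrib)
  then show ?thesis
    using \<alpha> unfolding J_def[symmetric] I_def[symmetric]
    by (intro ennreal_le_of_le_convex_combination[OF J_finite J_le]) auto
qed

lemma nn_integral_RN_deriv_distr_density_powr_le:
  fixes Q :: "'a measure" and p :: "'a \<Rightarrow> real"
  assumes Q: "prob_space Q" and p[measurable]: "p \<in> borel_measurable Q" and p_nonneg: "\<And>x. 0 \<le> p x"
    and g[measurable]: "g \<in> measurable Q N" and \<alpha>: "1 < \<alpha>"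
  shows "(\<integral>\<^sup>+\<omega>. enn2real (RN_deriv (distr Q N g) (distr (density Q p) N g) \<omega>) powr \<alpha> \<partial>distr Q N g)
           \<le> (\<integral>\<^sup>+x. p x powr \<alpha> \<partial>Q)"
proof -
  define h where "h = (\<lambda>\<omega>. enn2real (RN_deriv (distr Q N g) (distr (density Q p) N g) \<omega>))"
  have h[measurable]: "h \<in> borel_measurable N"
    unfolding h_def by (metis borel_measurable_RN_deriv borel_measurable_enn2real measurable_cong_sets sets_distr)
  have "ennreal (h \<omega> powr \<alpha>) = (SUP m::nat. ennreal (min (h \<omega>) (real m) powr \<alpha>))" for \<omega>
    using \<alpha> by (simp add: SUP_ennreal_min_powr h_def)
  then have "(\<integral>\<^sup>+\<omega>. h \<omega> powr \<alpha> \<partial>distr Q N g) = (SUP m::nat. \<integral>\<^sup>+\<omega>. min (h \<omega>) (real m) powr \<alpha> \<partial>distr Q N g)"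
    using \<alpha> by (simp only:) (intro nn_integral_monotone_convergence_SUP incseq_SucI le_funI
        ennreal_leI powr_mono2, auto simp: h_def)
  also have "\<dots> \<le> (\<integral>\<^sup>+x. p x powr \<alpha> \<partial>Q)"
  proof (rule SUP_least)
    fix m :: nat
    show "(\<integral>\<^sup>+\<omega>. min (h \<omega>) (real m) powr \<alpha> \<partial>distr Q N g) \<le> (\<integral>\<^sup>+x. p x powr \<alpha> \<partial>Q)"
      using assms
      by (intro nn_integral_powr_le_of_bounded_le_RN_deriv_distr_density[where B="real m"]) (auto simp: h_def)
  qed
  finally show ?thesis
    unfolding h_def .
qed

lemma renyi_divergence_distr_density_le:
  fixes Q :: "'a measure" and p :: "'a \<Rightarrow> real"
  assumes Q: "prob_space Q" and p[measurable]: "p \<in> borel_measurable Q" and p_nonneg: "\<And>x. 0 \<le> p x"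
    and g[measurable]: "g \<in> measurable Q N" and \<alpha>: "1 < \<alpha>" and D: "0 \<le> D"
    and moment: "(\<integral>\<^sup>+x. p x powr \<alpha> \<partial>Q) \<le> ennreal (exp ((\<alpha> - 1) * D))"
  shows "renyi_divergence \<alpha> (distr (density Q p) N g) (distr Q N g) \<le> ereal D"
proof -
  define I where "I = (\<integral>\<^sup>+\<omega>. enn2real (RN_deriv (distr Q N g) (distr (density Q p) N g) \<omega>) powr \<alpha> \<partial>distr Q N g)"
  have I_le: "I \<le> ennreal (exp ((\<alpha> - 1) * D))"
    unfolding I_def using nn_integral_RN_deriv_distr_density_powr_le[OF assms(1-5)] moment by (rule order_trans)
  then have "I \<noteq> \<top>"
    by (auto simp: top_unique)
  have "ln (enn2real I) \<le> (\<alpha> - 1) * D"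
  proof (cases "enn2real I = 0")
    case False
    then have "0 < enn2real I"
      using enn2real_nonneg[of I] by linarith
    then have "ln (enn2real I) \<le> ln (exp ((\<alpha> - 1) * D))"
      using enn2real_mono[OF I_le] by (subst ln_le_cancel_iff) auto
    then show ?thesis
      by simp
  qed (use \<alpha> D in simp)
  then have "ln (enn2real I) / (\<alpha> - 1) \<le> D"
    using \<alpha> by (simp add: divide_le_eq mult.commute)
  moreover have "absolutely_continuous (distr Q N g) (distr (density Q p) N g)"
    by (intro absolutely_continuous_distr absolutely_continuousI_density) simp_all
  ultimately show ?thesis
    using \<open>I \<noteq> \<top>\<close> unfolding renyi_divergence_def Let_def I_def by simp
qed

lemma indicator_PiE_eq_prod:
  assumes "finite I" "x \<in> PiE I B"
  shows "(indicator (PiE I A) x :: 'c::{comm_semiring_1,zero_neq_one}) = (\<Prod>i\<in>I. indicator (A i) (x i))"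
proof (cases "\<forall>i\<in>I. x i \<in> A i")
  case True
  then show ?thesis
    using assms by (auto simp: PiE_iff)
next
  case False
  then obtain i where "i \<in> I" "x i \<notin> A i"
    by blast
  then have "(\<Prod>i\<in>I. indicator (A i) (x i) :: 'c) = 0"
    using assms(1) by (auto intro!: prod_zero bexI[where x=i])
  moreover have "x \<notin> PiE I A"
    using False by (auto simp: PiE_iff)
  ultimately show ?thesis
    by simp
qed

lemma distr_PiM_componentwise:
  fixes M :: "'i \<Rightarrow> 'a measure" and N :: "'i \<Rightarrow> 'b measure"
  assumes I: "finite I" and M: "\<And>i. prob_space (M i)"
    and f[measurable]: "\<And>i. f i \<in> measurable (M i) (N i)"
  shows "distr (PiM I M) (PiM I N) (\<lambda>x. \<lambda>i\<in>I. f i (x i)) = PiM I (\<lambda>i. distr (M i) (N i) (f i))"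
proof -
  interpret M: product_sigma_finite M
    unfolding product_sigma_finite_def using M by (auto intro: prob_space_imp_sigma_finite)
  interpret product_sigma_finite "\<lambda>i. distr (M i) (N i) (f i)"
    unfolding product_sigma_finite_def
    by (metis M f prob_space.prob_space_distr prob_space_imp_sigma_finite)
  have F: "(\<lambda>x. \<lambda>i\<in>I. f i (x i)) \<in> measurable (PiM I M) (PiM I N)"
    by measurable
  show ?thesis
  proof (rule PiM_eqI[OF I])
    fix A assume A: "\<And>i. i \<in> I \<Longrightarrow> A i \<in> sets (distr (M i) (N i) (f i))"
    have "(\<lambda>x. \<lambda>i\<in>I. f i (x i)) -` PiE I A \<inter> space (PiM I M) = PiE I (\<lambda>i. f i -` A i \<inter> space (M i))"
      by (auto simp: space_PiM PiE_iff extensional_def)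
    moreover have "PiE I A \<in> sets (PiM I N)"
      using A I by (intro sets_PiM_I_finite) auto
    ultimately have "emeasure (distr (PiM I M) (PiM I N) (\<lambda>x. \<lambda>i\<in>I. f i (x i))) (PiE I A)
        = emeasure (PiM I M) (PiE I (\<lambda>i. f i -` A i \<inter> space (M i)))"
      using F by (simp add: emeasure_distr)
    also have "\<dots> = (\<Prod>i\<in>I. emeasure (distr (M i) (N i) (f i)) (A i))"
      using A I by (subst M.emeasure_PiM) (auto simp: emeasure_distr)
    finally show "emeasure (distr (PiM I M) (PiM I N) (\<lambda>x. \<lambda>i\<in>I. f i (x i))) (PiE I A)
        = (\<Prod>i\<in>I. emeasure (distr (M i) (N i) (f i)) (A i))" .
  qed (simp cong: sets_PiM_cong)
qed

lemma PiM_density: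
  fixes M :: "'i \<Rightarrow> 'a measure" and f :: "'i \<Rightarrow> 'a \<Rightarrow> ennreal"
  assumes I: "finite I" and M: "\<And>i. sigma_finite_measure (M i)"
    and Mf: "\<And>i. sigma_finite_measure (density (M i) (f i))"
    and f[measurable]: "\<And>i. i \<in> I \<Longrightarrow> f i \<in> borel_measurable (M i)"
  shows "PiM I (\<lambda>i. density (M i) (f i)) = density (PiM I M) (\<lambda>x. \<Prod>i\<in>I. f i (x i))"
proof -
  interpret M: product_sigma_finite M
    unfolding product_sigma_finite_def using M by auto
  interpret product_sigma_finite "\<lambda>i. density (M i) (f i)"
    unfolding product_sigma_finite_def using Mf by auto
  show ?thesis
  proof (rule PiM_eqI[OF I, symmetric])
    show "sets (density (PiM I M) (\<lambda>x. \<Prod>i\<in>I. f i (x i))) = sets (PiM I (\<lambda>i. density (M i) (f i)))"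
      by (simp cong: sets_PiM_cong)
    fix A assume A: "\<And>i. i \<in> I \<Longrightarrow> A i \<in> sets (density (M i) (f i))"
    then have A'[measurable]: "\<And>i. i \<in> I \<Longrightarrow> A i \<in> sets (M i)"
      by simp
    have "emeasure (density (PiM I M) (\<lambda>x. \<Prod>i\<in>I. f i (x i))) (PiE I A)
        = (\<integral>\<^sup>+x. (\<Prod>i\<in>I. f i (x i)) * indicator (PiE I A) x \<partial>PiM I M)"
      using A' I by (intro emeasure_density sets_PiM_I_finite) auto
    also have "\<dots> = (\<integral>\<^sup>+x. (\<Prod>i\<in>I. f i (x i) * indicator (A i) (x i)) \<partial>PiM I M)"
      using I by (intro nn_integral_cong) (simp add: space_PiM indicator_PiE_eq_prod prod.distrib)
    also have "\<dots> = (\<Prod>i\<in>I. \<integral>\<^sup>+x. f i x * indicator (A i) x \<partial>M i)"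
      using I by (intro M.product_nn_integral_prod) auto
    also have "\<dots> = (\<Prod>i\<in>I. emeasure (density (M i) (f i)) (A i))"
      using A' by (intro prod.cong refl) (simp add: emeasure_density)
    finally show "emeasure (density (PiM I M) (\<lambda>x. \<Prod>i\<in>I. f i (x i))) (PiE I A)
        = (\<Prod>i\<in>I. emeasure (density (M i) (f i)) (A i))" .
  qed
qed

definition normal_likelihood_ratio :: "real \<Rightarrow> real \<Rightarrow> real \<Rightarrow> real \<Rightarrow> real" where
  "normal_likelihood_ratio \<mu> \<mu>' \<sigma> x = exp (((x - \<mu>')\<^sup>2 - (x - \<mu>)\<^sup>2) / (2 * \<sigma>\<^sup>2))"

lemma normal_likelihood_ratio_nonneg: "0 \<le> normal_likelihood_ratio \<mu> \<mu>' \<sigma> x"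
  by (simp add: normal_likelihood_ratio_def)

lemma borel_measurable_normal_likelihood_ratio[measurable]:
  "normal_likelihood_ratio \<mu> \<mu>' \<sigma> \<in> borel_measurable borel"
  unfolding normal_likelihood_ratio_def by measurable

lemma normal_density_mult_likelihood_ratio:
  "normal_density \<mu>' \<sigma> x * normal_likelihood_ratio \<mu> \<mu>' \<sigma> x = normal_density \<mu> \<sigma> x"
proof -
  have "-(x - \<mu>')\<^sup>2 / (2 * \<sigma>\<^sup>2) + ((x - \<mu>')\<^sup>2 - (x - \<mu>)\<^sup>2) / (2 * \<sigma>\<^sup>2) = -(x - \<mu>)\<^sup>2 / (2 * \<sigma>\<^sup>2)"
    by (simp add: diff_divide_distrib)
  then show ?thesis
    unfolding normal_density_def normal_likelihood_ratio_def by (simp add: mult.assoc flip: exp_add)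
qed

lemma normal_density_mult_likelihood_ratio_powr:
  "normal_density \<mu>' \<sigma> x * normal_likelihood_ratio \<mu> \<mu>' \<sigma> x powr \<alpha>
     = exp (\<alpha> * (\<alpha> - 1) * (\<mu> - \<mu>')\<^sup>2 / (2 * \<sigma>\<^sup>2)) * normal_density (\<alpha> * \<mu> + (1 - \<alpha>) * \<mu>') \<sigma> x"
proof -
  have "-(x - \<mu>')\<^sup>2 / (2 * \<sigma>\<^sup>2) + ((x - \<mu>')\<^sup>2 - (x - \<mu>)\<^sup>2) / (2 * \<sigma>\<^sup>2) * \<alpha>
      = (-(x - \<mu>')\<^sup>2 + \<alpha> * ((x - \<mu>')\<^sup>2 - (x - \<mu>)\<^sup>2)) / (2 * \<sigma>\<^sup>2)"
    by (simp add: add_divide_distrib diff_divide_distrib algebra_simps)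
  also have "-(x - \<mu>')\<^sup>2 + \<alpha> * ((x - \<mu>')\<^sup>2 - (x - \<mu>)\<^sup>2)
      = \<alpha> * (\<alpha> - 1) * (\<mu> - \<mu>')\<^sup>2 + -(x - (\<alpha> * \<mu> + (1 - \<alpha>) * \<mu>'))\<^sup>2"
    by (simp add: power2_eq_square algebra_simps)
  finally have "-(x - \<mu>')\<^sup>2 / (2 * \<sigma>\<^sup>2) + ((x - \<mu>')\<^sup>2 - (x - \<mu>)\<^sup>2) / (2 * \<sigma>\<^sup>2) * \<alpha>
      = \<alpha> * (\<alpha> - 1) * (\<mu> - \<mu>')\<^sup>2 / (2 * \<sigma>\<^sup>2) + -(x - (\<alpha> * \<mu> + (1 - \<alpha>) * \<mu>'))\<^sup>2 / (2 * \<sigma>\<^sup>2)"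
    by (simp add: add_divide_distrib diff_divide_distrib)
  then show ?thesis
    unfolding normal_density_def normal_likelihood_ratio_def exp_powr_real
    by (metis (no_types, lifting) exp_add mult.assoc mult.left_commute)
qed

lemma density_normal_likelihood_ratio:
  "density (density lborel (normal_density \<mu>' \<sigma>)) (normal_likelihood_ratio \<mu> \<mu>' \<sigma>)
     = density lborel (normal_density \<mu> \<sigma>)"
  by (simp add: density_density_eq normal_density_mult_likelihood_ratio ennreal_mult'[symmetric])

lemma nn_integral_normal_likelihood_ratio_powr:
  assumes "0 < \<sigma>"
  shows "(\<integral>\<^sup>+x. normal_likelihood_ratio \<mu> \<mu>' \<sigma> x powr \<alpha> \<partial>density lborel (normal_density \<mu>' \<sigma>))
           = ennreal (exp (\<alpha> * (\<alpha> - 1) * (\<mu> - \<mu>')\<^sup>2 / (2 * \<sigma>\<^sup>2)))"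
proof -
  let ?K = "exp (\<alpha> * (\<alpha> - 1) * (\<mu> - \<mu>')\<^sup>2 / (2 * \<sigma>\<^sup>2))"
  let ?N = "density lborel (normal_density (\<alpha> * \<mu> + (1 - \<alpha>) * \<mu>') \<sigma>)"
  interpret N: prob_space ?N
    using assms by (rule prob_space_normal_density)
  have "(\<integral>\<^sup>+x. normal_likelihood_ratio \<mu> \<mu>' \<sigma> x powr \<alpha> \<partial>density lborel (normal_density \<mu>' \<sigma>))
      = (\<integral>\<^sup>+x. ennreal ?K * normal_density (\<alpha> * \<mu> + (1 - \<alpha>) * \<mu>') \<sigma> x \<partial>lborel)"
    by (simp add: nn_integral_density normal_density_mult_likelihood_ratio_powr
        ennreal_mult'[symmetric])
  also have "\<dots> = ennreal ?K * emeasure ?N (space ?N)"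
    by (simp add: nn_integral_cmult emeasure_density)
  also have "emeasure ?N (space ?N) = 1"
    by (rule N.emeasure_space_1)
  finally show ?thesis
    by simp
qed

definition gaussian_PiM :: "'i set \<Rightarrow> ('i \<Rightarrow> real) \<Rightarrow> ('i \<Rightarrow> real) \<Rightarrow> ('i \<Rightarrow> real) measure" where
  "gaussian_PiM I \<mu> \<sigma> = PiM I (\<lambda>i. density lborel (normal_density (\<mu> i) (\<sigma> i)))"

lemma sets_gaussian_PiM[measurable_cong]: "sets (gaussian_PiM I \<mu> \<sigma>) = sets (PiM I (\<lambda>_. borel))"
  unfolding gaussian_PiM_def by (intro sets_PiM_cong) auto

lemma prob_space_gaussian_PiM:
  "(\<And>i. i \<in> I \<Longrightarrow> 0 < \<sigma> i) \<Longrightarrow> prob_space (gaussian_PiM I \<mu> \<sigma>)"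
  unfolding gaussian_PiM_def by (intro prob_space_PiM prob_space_normal_density)

lemma distr_normal_density_add:
  "distr (density lborel (normal_density \<mu> \<sigma>)) borel (\<lambda>x. x + a) = density lborel (normal_density (\<mu> + a) \<sigma>)"
proof -
  have "density lborel (normal_density (\<mu> + a) \<sigma>)
      = density (distr lborel borel ((+) a)) (normal_density (\<mu> + a) \<sigma>)"
    by (simp add: lborel_distr_plus)
  also have "\<dots> = distr (density lborel (\<lambda>x. normal_density (\<mu> + a) \<sigma> (a + x))) borel ((+) a)"
    by (rule density_distr) simp_all
  also have "(\<lambda>x. normal_density (\<mu> + a) \<sigma> (a + x)) = normal_density \<mu> \<sigma>"
    by (simp add: normal_density_def fun_eq_iff)
  finally show ?thesis
    by (simp add: add.commute)
qed

lemma distr_gaussian_PiM_add: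
  assumes "finite I" "\<And>i. 0 < \<sigma> i"
  shows "distr (gaussian_PiM I \<mu> \<sigma>) (PiM I (\<lambda>_. borel)) (\<lambda>z. \<lambda>i\<in>I. z i + a i)
           = gaussian_PiM I (\<lambda>i. \<mu> i + a i) \<sigma>"
  unfolding gaussian_PiM_def
proof (subst distr_PiM_componentwise)
  show "(\<lambda>x. x + a i) \<in> measurable (density lborel (normal_density (\<mu> i) (\<sigma> i))) borel" for i
    by simp
qed (use assms in \<open>simp_all add: prob_space_normal_density distr_normal_density_add\<close>)

lemma gaussian_PiM_eq_density_likelihood_ratio:
  assumes "finite I" "\<And>i. 0 < \<sigma> i"
  shows "gaussian_PiM I \<mu> \<sigma>
           = density (gaussian_PiM I \<mu>' \<sigma>) (\<lambda>z. \<Prod>i\<in>I. normal_likelihood_ratio (\<mu> i) (\<mu>' i) (\<sigma> i) (z i))"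
proof -
  have "gaussian_PiM I \<mu> \<sigma> = PiM I (\<lambda>i. density (density lborel (normal_density (\<mu>' i) (\<sigma> i)))
                                          (normal_likelihood_ratio (\<mu> i) (\<mu>' i) (\<sigma> i)))"
    unfolding gaussian_PiM_def density_normal_likelihood_ratio ..
  also have "\<dots> = density (gaussian_PiM I \<mu>' \<sigma>)
                    (\<lambda>z. \<Prod>i\<in>I. ennreal (normal_likelihood_ratio (\<mu> i) (\<mu>' i) (\<sigma> i) (z i)))"
    unfolding gaussian_PiM_def
    using assms
    by (intro PiM_density prob_space_imp_sigma_finite prob_space_normal_density)
      (auto simp: density_normal_likelihood_ratio intro: prob_space_normal_density)
  finally show ?thesis
    by (simp add: prod_ennreal normal_likelihood_ratio_nonneg)
qed

lemma nn_integral_gaussian_likelihood_ratio_powr: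
  assumes I: "finite I" and \<sigma>: "\<And>i. 0 < \<sigma> i"
  shows "(\<integral>\<^sup>+z. (\<Prod>i\<in>I. normal_likelihood_ratio (\<mu> i) (\<mu>' i) (\<sigma> i) (z i)) powr \<alpha> \<partial>gaussian_PiM I \<mu>' \<sigma>)
           = ennreal (exp (\<alpha> * (\<alpha> - 1) * (\<Sum>i\<in>I. (\<mu> i - \<mu>' i)\<^sup>2 / (2 * (\<sigma> i)\<^sup>2))))"
proof -
  interpret product_sigma_finite "\<lambda>i. density lborel (normal_density (\<mu>' i) (\<sigma> i))"
    unfolding product_sigma_finite_def
    using \<sigma> by (auto intro: prob_space_imp_sigma_finite prob_space_normal_density)
  have "(\<integral>\<^sup>+z. (\<Prod>i\<in>I. normal_likelihood_ratio (\<mu> i) (\<mu>' i) (\<sigma> i) (z i)) powr \<alpha> \<partial>gaussian_PiM I \<mu>' \<sigma>)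
      = (\<integral>\<^sup>+z. (\<Prod>i\<in>I. ennreal (normal_likelihood_ratio (\<mu> i) (\<mu>' i) (\<sigma> i) (z i) powr \<alpha>)) \<partial>gaussian_PiM I \<mu>' \<sigma>)"
    by (simp add: prod_powr_distrib prod_ennreal)
  also have "\<dots> = (\<Prod>i\<in>I. \<integral>\<^sup>+x. normal_likelihood_ratio (\<mu> i) (\<mu>' i) (\<sigma> i) x powr \<alpha>
                               \<partial>density lborel (normal_density (\<mu>' i) (\<sigma> i)))"
    unfolding gaussian_PiM_def using I by (intro product_nn_integral_prod) auto
  also have "\<dots> = (\<Prod>i\<in>I. ennreal (exp (\<alpha> * (\<alpha> - 1) * ((\<mu> i - \<mu>' i)\<^sup>2 / (2 * (\<sigma> i)\<^sup>2)))))"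
    using \<sigma> by (simp add: nn_integral_normal_likelihood_ratio_powr)
  also have "\<dots> = ennreal (exp (\<alpha> * (\<alpha> - 1) * (\<Sum>i\<in>I. (\<mu> i - \<mu>' i)\<^sup>2 / (2 * (\<sigma> i)\<^sup>2))))"
    using I by (simp add: prod_ennreal exp_sum sum_distrib_left)
  finally show ?thesis .
qed

lemma renyi_divergence_distr_gaussian_PiM_le:
  assumes I: "finite I" and \<sigma>: "\<And>i. 0 < \<sigma> i" and \<alpha>: "1 < \<alpha>"
    and g[measurable]: "g \<in> measurable (PiM I (\<lambda>_. borel)) N"
    and loss: "(\<Sum>i\<in>I. (\<mu> i - \<mu>' i)\<^sup>2 / (2 * (\<sigma> i)\<^sup>2)) \<le> \<rho>"
  shows "renyi_divergence \<alpha> (distr (gaussian_PiM I \<mu> \<sigma>) N g) (distr (gaussian_PiM I \<mu>' \<sigma>) N g)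
           \<le> ereal (\<rho> * \<alpha>)"
proof -
  define p where "p z = (\<Prod>i\<in>I. normal_likelihood_ratio (\<mu> i) (\<mu>' i) (\<sigma> i) (z i))" for z
  have "0 \<le> \<rho>"
    using loss by (rule order_trans[rotated]) (simp add: sum_nonneg)
  have "\<alpha> * (\<alpha> - 1) * (\<Sum>i\<in>I. (\<mu> i - \<mu>' i)\<^sup>2 / (2 * (\<sigma> i)\<^sup>2)) \<le> (\<alpha> - 1) * (\<rho> * \<alpha>)"
    using \<alpha> loss by (simp add: mult.commute mult.left_commute mult_left_mono)
  then have moment: "(\<integral>\<^sup>+z. p z powr \<alpha> \<partial>gaussian_PiM I \<mu>' \<sigma>) \<le> ennreal (exp ((\<alpha> - 1) * (\<rho> * \<alpha>)))"
    unfolding p_def nn_integral_gaussian_likelihood_ratio_powr[OF I \<sigma>] by (intro ennreal_leI) simp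
  have "renyi_divergence \<alpha> (distr (density (gaussian_PiM I \<mu>' \<sigma>) p) N g) (distr (gaussian_PiM I \<mu>' \<sigma>) N g)
          \<le> ereal (\<rho> * \<alpha>)"
    using \<sigma> \<alpha> \<open>0 \<le> \<rho>\<close> moment
    by (intro renyi_divergence_distr_density_le prob_space_gaussian_PiM)
      (auto simp: p_def prod_nonneg normal_likelihood_ratio_nonneg)
  then show ?thesis
    by (subst gaussian_PiM_eq_density_likelihood_ratio[OF I \<sigma>, where \<mu>=\<mu> and \<mu>'=\<mu>']) (simp add: p_def)
qed

lemma zCDP_gaussian_mechanism:
  fixes M :: "(real \<times> real) list \<Rightarrow> 'b measure"
  assumes I: "finite I" and \<sigma>: "\<And>i. 0 < \<sigma> i" and g: "g \<in> measurable (PiM I (\<lambda>_. borel)) N"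
    and M: "\<And>xs. M xs = distr (gaussian_PiM I (\<mu> xs) \<sigma>) N g"
    and loss: "\<And>xs xs'. neighboring n xs xs' \<Longrightarrow> (\<Sum>i\<in>I. (\<mu> xs i - \<mu> xs' i)\<^sup>2 / (2 * (\<sigma> i)\<^sup>2)) \<le> \<rho>"
  shows "zCDP n \<rho> M"
  unfolding zCDP_def M using renyi_divergence_distr_gaussian_PiM_le[OF I \<sigma> _ g loss] by blast

lemma abs_sum_list_map_diff_le:
  fixes f :: "'a \<Rightarrow> real"
  assumes len: "length L = length L'" and eq: "\<And>j. j < length L \<Longrightarrow> j \<noteq> i \<Longrightarrow> L ! j = L' ! j"
    and f: "\<And>a b. \<bar>f a - f b\<bar> \<le> B"
  shows "\<bar>sum_list (map f L) - sum_list (map f L')\<bar> \<le> B"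
proof -
  have "sum_list (map f L) - sum_list (map f L') = (\<Sum>j<length L. f (L ! j) - f (L' ! j))"
    using len by (simp add: sum_list_sum_nth atLeast0LessThan sum_subtractf)
  also have "\<dots> = (\<Sum>j<length L. if j = i then f (L ! i) - f (L' ! i) else 0)"
    using eq by (intro sum.cong) auto
  also have "\<dots> = (if i < length L then f (L ! i) - f (L' ! i) else 0)"
    by simp
  finally show ?thesis
    using f[of "L ! i" "L' ! i"] f[of undefined undefined] by simp
qed

lemma clip_diff_le: "a \<le> b \<Longrightarrow> \<bar>clip a b u - clip a b v\<bar> \<le> b - a"
  unfolding clip_def by (auto simp: max_def min_def abs_if)

definition dpstats_stat :: "nat \<Rightarrow> nat \<Rightarrow> real \<Rightarrow> (real \<times> real) list \<Rightarrow> nat \<Rightarrow> real" where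
  "dpstats_stat n n1 \<Delta> xs k =
     (let G = (if k < 4 then take n1 xs else drop n1 xs); nj = real (if k < 4 then n1 else n - n1) in
      (if k mod 4 = 0 then (\<Sum>(x,y)\<leftarrow>G. clip (-\<Delta>) \<Delta> x)
       else if k mod 4 = 1 then (\<Sum>(x,y)\<leftarrow>G. clip 0 (\<Delta>^2) (x^2))
       else if k mod 4 = 2 then (\<Sum>(x,y)\<leftarrow>G. clip (-(\<Delta>^2)) (\<Delta>^2) (x*y))
       else (\<Sum>(x,y)\<leftarrow>G. clip 0 (\<Delta>^2) (y^2))) / nj)"

definition dpstats_sensitivity :: "real \<Rightarrow> nat \<Rightarrow> real" where
  "dpstats_sensitivity \<Delta> k = (if k mod 4 = 0 then 2 * \<Delta> else if k mod 4 = 2 then 2 * \<Delta>^2 else \<Delta>^2)"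

text \<open>On the empty dataset every clipped sum vanishes, so \<open>dpstats_out n n1 r \<Delta> []\<close> is the
  post-processing that the mechanism applies to the eight noisy statistics.\<close>

lemma dpstats_out_eq_post_processing:
  "dpstats_out n n1 r \<Delta> xs z = dpstats_out n n1 r \<Delta> [] (\<lambda>k\<in>{0..<8}. z k + dpstats_stat n n1 \<Delta> xs k)"
  unfolding dpstats_out_def Let_def dpstats_stat_def by (simp add: add.commute)

lemma measurable_if_Some_None:
  fixes F :: "'a \<Rightarrow> 'b::topological_space"
  assumes F[measurable]: "F \<in> borel_measurable M" and P[measurable]: "Measurable.pred M P"
  shows "(\<lambda>z. if P z then Some (F z) else None) \<in> measurable M (sigma UNIV {A. Some -` A \<in> sets borel})"
proof (rule measurable_measure_of)
  fix A assume "A \<in> {A. Some -` A \<in> sets (borel :: 'b measure)}"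
  then have [measurable]: "Some -` A \<in> sets borel"
    by simp
  have "(\<lambda>z. if P z then Some (F z) else None) -` A \<inter> space M
      = {z \<in> space M. P z \<and> F z \<in> Some -` A} \<union> {z \<in> space M. \<not> P z \<and> None \<in> A}"
    by (auto split: if_splits)
  also have "\<dots> \<in> sets M"
    by measurable
  finally show "(\<lambda>z. if P z then Some (F z) else None) -` A \<inter> space M \<in> sets M" .
qed auto

lemma measurable_dpstats_out:
  "dpstats_out n n1 r \<Delta> [] \<in> measurable (PiM {0..<8} (\<lambda>_. borel)) out_space"
  unfolding out_space_def dpstats_out_def Let_def
  by (rule measurable_if_Some_None) measurable

lemma noise_var_eq:
  "noise_var \<rho> \<Delta> n1 n2 k = (dpstats_sensitivity \<Delta> k / real (if k < 4 then n1 else n2))\<^sup>2 / (2 * (\<rho> / 8))"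
proof -
  have "k mod 4 = 0 \<or> k mod 4 = 1 \<or> k mod 4 = 2 \<or> k mod 4 = 3"
    by auto
  then show ?thesis
    unfolding noise_var_def dpstats_sensitivity_def Let_def
    by (elim disjE) (simp_all add: power2_eq_square power4_eq_xxxx field_simps)
qed

lemma noise_var_pos:
  assumes "0 < \<rho>" "0 < \<Delta>" "1 \<le> n1" "n1 < n"
  shows "0 < noise_var \<rho> \<Delta> n1 (n - n1) k"
  using assms unfolding noise_var_eq dpstats_sensitivity_def by auto

lemma DPStats_M_eq_distr_gaussian_PiM:
  assumes "0 < \<rho>" "0 < \<Delta>" "1 \<le> n1" "n1 < n"
  shows "DPStats_M n n1 r q \<rho> \<Delta> xs
           = distr (gaussian_PiM {0..<8} (dpstats_stat n n1 \<Delta> xs) (\<lambda>k. sqrt (noise_var \<rho> \<Delta> n1 (n - n1) k)))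
               out_space (dpstats_out n n1 r \<Delta> [])"
proof -
  let ?\<sigma> = "\<lambda>k. sqrt (noise_var \<rho> \<Delta> n1 (n - n1) k)"
  have \<sigma>: "0 < ?\<sigma> k" for k
    using noise_var_pos[OF assms] by simp
  have "DPStats_M n n1 r q \<rho> \<Delta> xs
      = distr (gaussian_PiM {0..<8} (\<lambda>_. 0) ?\<sigma>) out_space
          (dpstats_out n n1 r \<Delta> [] \<circ> (\<lambda>z. \<lambda>k\<in>{0..<8}. z k + dpstats_stat n n1 \<Delta> xs k))"
    unfolding DPStats_M_def noise_space_def gaussian_PiM_def
    by (intro distr_cong) (simp_all add: dpstats_out_eq_post_processing[of n n1 r \<Delta> xs])
  also have "\<dots> = distr (distr (gaussian_PiM {0..<8} (\<lambda>_. 0) ?\<sigma>) (PiM {0..<8} (\<lambda>_. borel))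
                      (\<lambda>z. \<lambda>k\<in>{0..<8}. z k + dpstats_stat n n1 \<Delta> xs k))
                    out_space (dpstats_out n n1 r \<Delta> [])"
    by (intro distr_distr[symmetric] measurable_dpstats_out) measurable
  also have "\<dots> = distr (gaussian_PiM {0..<8} (dpstats_stat n n1 \<Delta> xs) ?\<sigma>) out_space (dpstats_out n n1 r \<Delta> [])"
    using \<sigma> by (simp add: distr_gaussian_PiM_add)
  finally show ?thesis .
qed

lemma dpstats_stat_diff_le:
  assumes nb: "neighboring n xs xs'" and \<Delta>: "0 < \<Delta>"
  shows "\<bar>dpstats_stat n n1 \<Delta> xs k - dpstats_stat n n1 \<Delta> xs' k\<bar>
           \<le> dpstats_sensitivity \<Delta> k / real (if k < 4 then n1 else n - n1)"
proof -
  obtain i where len: "length xs = length xs'" and eq: "\<And>j. j < length xs \<Longrightarrow> j \<noteq> i \<Longrightarrow> xs ! j = xs' ! j"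
    using nb unfolding neighboring_def by auto
  define G where "G = (\<lambda>ys :: (real \<times> real) list. if k < 4 then take n1 ys else drop n1 ys)"
  define nj where "nj = real (if k < 4 then n1 else n - n1)"
  define f where "f = (\<lambda>(x, y). if k mod 4 = 0 then clip (-\<Delta>) \<Delta> x
                                else if k mod 4 = 1 then clip 0 (\<Delta>^2) (x^2)
                                else if k mod 4 = 2 then clip (-(\<Delta>^2)) (\<Delta>^2) (x*y)
                                else clip 0 (\<Delta>^2) (y^2))"
  have stat: "dpstats_stat n n1 \<Delta> ys k = sum_list (map f (G ys)) / nj" for ys
    unfolding dpstats_stat_def G_def nj_def f_def Let_def by (simp add: case_prod_unfold)
  have "length (G xs) = length (G xs')"
    using len by (simp add: G_def)
  moreover have "G xs ! j = G xs' ! j"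
    if "j < length (G xs)" "j \<noteq> (if k < 4 then i else i - n1)" for j
    \<comment> \<open>if \<open>i < n1\<close>, the truncated index \<open>i - n1 = 0\<close> is harmless: the second groups agree\<close>
    using that len eq by (auto simp: G_def split: if_splits)
  moreover have "\<bar>f a - f b\<bar> \<le> dpstats_sensitivity \<Delta> k" for a b
    unfolding f_def dpstats_sensitivity_def using \<Delta>
    by (cases a; cases b) (auto intro: clip_diff_le[THEN order_trans])
  ultimately have "\<bar>sum_list (map f (G xs)) - sum_list (map f (G xs'))\<bar> \<le> dpstats_sensitivity \<Delta> k"
    by (rule abs_sum_list_map_diff_le)
  moreover have "0 \<le> nj"
    by (simp add: nj_def)
  ultimately show ?thesis
    unfolding stat nj_def[symmetric]
    by (simp add: abs_divide divide_right_mono flip: diff_divide_distrib)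
qed

lemma gaussian_loss_le_of_sensitivity:
  fixes d s \<rho> :: real
  assumes "\<bar>d\<bar> \<le> s" "0 < s" "0 < \<rho>"
  shows "d\<^sup>2 / (2 * (s\<^sup>2 / (2 * \<rho>))) \<le> \<rho>"
proof -
  have "d\<^sup>2 \<le> s\<^sup>2"
    using assms by (metis abs_ge_zero power2_abs power_mono)
  then show ?thesis
    using assms by (simp add: field_simps mult_right_mono)
qed

lemma dpstats_privacy_loss_le:
  assumes \<rho>: "0 < \<rho>" and \<Delta>: "0 < \<Delta>" and n1: "1 \<le> n1" "n1 < n" and nb: "neighboring n xs xs'"
  shows "(\<Sum>k\<in>{0..<8}. (dpstats_stat n n1 \<Delta> xs k - dpstats_stat n n1 \<Delta> xs' k)\<^sup>2
                         / (2 * (sqrt (noise_var \<rho> \<Delta> n1 (n - n1) k))\<^sup>2)) \<le> \<rho>"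
proof -
  have "(\<Sum>k\<in>{0..<8}. (dpstats_stat n n1 \<Delta> xs k - dpstats_stat n n1 \<Delta> xs' k)\<^sup>2
                         / (2 * (sqrt (noise_var \<rho> \<Delta> n1 (n - n1) k))\<^sup>2)) \<le> (\<Sum>k\<in>{0..<8::nat}. \<rho> / 8)"
  proof (rule sum_mono)
    fix k :: nat
    define s where "s = dpstats_sensitivity \<Delta> k / real (if k < 4 then n1 else n - n1)"
    have "0 < s"
      using \<Delta> n1 by (simp add: s_def dpstats_sensitivity_def)
    have "\<bar>dpstats_stat n n1 \<Delta> xs k - dpstats_stat n n1 \<Delta> xs' k\<bar> \<le> s"
      unfolding s_def by (rule dpstats_stat_diff_le[OF nb \<Delta>])
    then have "(dpstats_stat n n1 \<Delta> xs k - dpstats_stat n n1 \<Delta> xs' k)\<^sup>2 / (2 * (s\<^sup>2 / (2 * (\<rho> / 8)))) \<le> \<rho> / 8"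
      using \<open>0 < s\<close> \<rho> by (intro gaussian_loss_le_of_sensitivity) simp_all
    moreover have "(sqrt (noise_var \<rho> \<Delta> n1 (n - n1) k))\<^sup>2 = s\<^sup>2 / (2 * (\<rho> / 8))"
      using noise_var_pos[OF \<rho> \<Delta> n1, of k] by (simp add: noise_var_eq s_def)
    ultimately show "(dpstats_stat n n1 \<Delta> xs k - dpstats_stat n n1 \<Delta> xs' k)\<^sup>2
                       / (2 * (sqrt (noise_var \<rho> \<Delta> n1 (n - n1) k))\<^sup>2) \<le> \<rho> / 8"
      by simp
  qed
  then show ?thesis
    by simp
qed

theorem lemma4p3:
  fixes n n1 r q :: nat and \<rho> \<Delta> :: real
  assumes "\<rho> > 0" and "\<Delta> > 0"
    and "n \<ge> 2" and "1 \<le> n1" and "n1 < n"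
    and "r > 0" and "q > 0" and "r < n"
  shows "zCDP n \<rho> (DPStats_M n n1 r q \<rho> \<Delta>)"
proof (rule zCDP_gaussian_mechanism)
  show "finite {0..<8::nat}"
    by simp
  show "0 < sqrt (noise_var \<rho> \<Delta> n1 (n - n1) k)" for k
    using noise_var_pos assms by simp
  show "DPStats_M n n1 r q \<rho> \<Delta> xs
          = distr (gaussian_PiM {0..<8} (dpstats_stat n n1 \<Delta> xs) (\<lambda>k. sqrt (noise_var \<rho> \<Delta> n1 (n - n1) k)))
              out_space (dpstats_out n n1 r \<Delta> [])" for xs
    using assms by (intro DPStats_M_eq_distr_gaussian_PiM)
  show "(\<Sum>k\<in>{0..<8}. (dpstats_stat n n1 \<Delta> xs k - dpstats_stat n n1 \<Delta> xs' k)\<^sup>2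
            / (2 * (sqrt (noise_var \<rho> \<Delta> n1 (n - n1) k))\<^sup>2)) \<le> \<rho>"
    if "neighboring n xs xs'" for xs xs'
    using assms that by (intro dpstats_privacy_loss_le)
qed (rule measurable_dpstats_out)

end
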